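(* Let $\Gamma\subset\mathbb{R}^2$ be an arbitrary polygon, i.e. a finite union of straight line segments. Then there exists a set $A\subset\mathbb{R}^2$ of full Lebesgue measure such that $A+\Gamma$ has empty interior.
   Context: $X+Y=\{x+y:x\in X,y\in Y\}$; "full measure" means the complement has two-dimensional Lebesgue measure zero. *)

theory Defs
  imports "HOL-Analysis.Analysis"
begin

definition minkowski_sum :: "(real^2) set \<Rightarrow> (real^2) set \<Rightarrow> (real^2) set" where
  "minkowski_sum X Y = {x + y | x y. x \<in> X \<and> y \<in> Y}"

definition polygon :: "(real^2) set \<Rightarrow> bool" where
  "polygon G \<longleftrightarrow> (\<exists>S. finite S \<and> G = (\<Union>(a,b)\<in>S. closed_segment a b))"

end

theory Submission
  imports Defs
begin

text \<open>A polygon is a Lebesgue null set, and so is each reflected translate \<open>d - \<Gamma>\<close>.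
  Fix a countable dense set \<open>D\<close> and remove from the plane the null set
  \<open>\<Union>d\<in>D. d - \<Gamma>\<close>; the remaining set \<open>A\<close> has full measure, and \<open>A + \<Gamma>\<close> misses
  every point of \<open>D\<close>, so it contains no open ball.\<close>

lemma negligible_closed_segment:
  fixes a b :: "'a::euclidean_space"
  assumes "2 \<le> DIM('a)"
  shows "negligible (closed_segment a b)"
  using negligible_convex_interior[of "closed_segment a b"] interior_closed_segment_ge2[OF assms]
  by simp

lemma polygon_negligible:
  assumes "polygon \<Gamma>"
  shows "negligible \<Gamma>"
proof -
  obtain S where "finite S" and \<Gamma>: "\<Gamma> = (\<Union>(a,b)\<in>S. closed_segment a b)"
    using assms unfolding polygon_def by blast
  then show ?thesis
    by (auto intro!: negligible_Union negligible_closed_segment)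
qed

lemma negligible_reflected_translate:
  fixes G :: "'a::euclidean_space set"
  assumes "negligible G"
  shows "negligible ((\<lambda>g. z - g) ` G)"
  by (rule negligible_differentiable_image_negligible[OF order_refl assms])
     (auto intro!: derivative_intros)

lemma conull_set_sum_negligible_empty_interior:
  fixes G :: "'a::euclidean_space set"
  assumes "negligible G"
  shows "\<exists>A. UNIV - A \<in> null_sets lebesgue \<and> interior {a + g | a g. a \<in> A \<and> g \<in> G} = {}"
proof -
  obtain D :: "'a set" where "countable D"
    and dense: "\<And>X. open X \<Longrightarrow> X \<noteq> {} \<Longrightarrow> \<exists>d\<in>D. d \<in> X"
    using countable_dense_exists by blast
  define N where "N = (\<Union>d\<in>D. (\<lambda>g. d - g) ` G)"
  have "negligible N"
    unfolding N_def using \<open>countable D\<close> negligible_reflected_translate[OF assms] by auto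
  define A where "A = UNIV - N"
  have misses_D: "d \<notin> {a + g | a g. a \<in> A \<and> g \<in> G}" if "d \<in> D" for d
    using that by (force simp: A_def N_def)
  have "interior {a + g | a g. a \<in> A \<and> g \<in> G} = {}"
    using dense[OF open_interior] misses_D interior_subset by blast
  moreover have "UNIV - A \<in> null_sets lebesgue"
    using \<open>negligible N\<close> by (simp add: A_def negligible_iff_null_sets Diff_Diff_Int)
  ultimately show ?thesis
    by blast
qed

theorem mainTheorem11:
  fixes \<Gamma> :: "(real^2) set"
  assumes "polygon \<Gamma>"
  shows "\<exists>A. (UNIV - A) \<in> null_sets lebesgue \<and> interior (minkowski_sum A \<Gamma>) = {}"
  using conull_set_sum_negligible_empty_interior[OF polygon_negligible[OF assms]]
  by (simp add: minkowski_sum_def)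

end
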